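(* Let $\mathcal{G}=(N,\mathcal{W})$ be an SVG and let $i\neq j$ be players in $N$, where $j$ is a YES-blocker (or a NO-blocker) of $\mathcal{G}$. Let $\hat{\mathcal{G}}=\mathcal{G}^{j\to i}$ be the game obtained when $j$ fully donates its vote to $i$. Then $$RM'_i(\hat{\mathcal{G}})\le RM'_i(\mathcal{G})+RM'_j(\mathcal{G}).$$
   Context: A simple voting game (SVG) is a pair $\mathcal{G}=(N,\mathcal{W})$ with $N$ a nonempty finite set of $n$ players and $\mathcal{W}\subseteq 2^N$ monotone, $\emptyset\notin\mathcal{W}$, $N\in\mathcal{W}$. Divisions are identified with their YES-sets $S\subseteq N$; $S$ is winning iff $S\in\mathcal{W}$. Decisiveness and success: - Player $k$ is YES-decisive in $S$ if $k\in S\in\mathcal{W}$ and $S\setminus\{k\}\notin\mathcal{W}$. - Player $k$ is NO-decisive in $S$ if $k\notin S\notin\mathcal{W}$ and $S\cup\{k\}\in\mathcal{W}$. - Player $k$ is decisive if it is either. - Player $k$ is successful in $S$ if ($k\in S\in\mathcal{W}$) or ($k\notin S\notin\mathcal{W}$). Loyal children: if $S\in\mathcal{W}$, the loyal children are the sets $S\setminus\{m\}\in\mathcal{W}$ with $m\in S$. If $S\notin\mathcal{W}$, they are the sets $S\cup\{m\}\notin\mathcal{W}$ with $m\notin S$. The recursive efficacy score $\alpha_k(S)$ is defined by: - $\alpha_k(S)=1$ if $k$ is decisive in $S$; - $\alpha_k(S)=0$ if $k$ is not successful in $S$; - otherwise, $\alpha_k(S)$ is the average of $\alpha_k$ over the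 loyal children of $S$. The a priori Recursive Measure is $RM'_k=2^{-n}\sum_{S\subseteq N}\alpha_k(S)$. Blockers: $b$ is a YES-blocker if $b\in S$ for all $S\in\mathcal{W}$, and a NO-blocker if $b\notin S$ for all $S\notin\mathcal{W}$. Donation game: $\mathcal{G}^{j\to i}$ is the SVG on the same player set $N$ whose winning sets are determined as follows. For $S\subseteq N\setminus\{i,j\}$: - $S\cup\{i,j\}$ and $S\cup\{i\}$ are winning iff $S\cup\{i,j\}\in\mathcal{W}$; - $S\cup\{j\}$ and $S$ are winning iff $S\in\mathcal{W}$. In particular $j$ is a dummy in $\mathcal{G}^{j\to i}$. *)

theory Defs
  imports Complex_Main
begin

definition svg :: "'a set \<Rightarrow> 'a set set \<Rightarrow> bool" where
  "svg N W \<longleftrightarrow> finite N \<and> N \<noteq> {} \<and> W \<subseteq> Pow N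
     \<and> (\<forall>S T. S \<in> W \<and> S \<subseteq> T \<and> T \<subseteq> N \<longrightarrow> T \<in> W)
     \<and> {} \<notin> W \<and> N \<in> W"

definition yes_decisive :: "'a set set \<Rightarrow> 'a \<Rightarrow> 'a set \<Rightarrow> bool" where
  "yes_decisive W k S \<longleftrightarrow> k \<in> S \<and> S \<in> W \<and> S - {k} \<notin> W"

definition no_decisive :: "'a set set \<Rightarrow> 'a \<Rightarrow> 'a set \<Rightarrow> bool" where
  "no_decisive W k S \<longleftrightarrow> k \<notin> S \<and> S \<notin> W \<and> insert k S \<in> W"

definition decisive :: "'a set set \<Rightarrow> 'a \<Rightarrow> 'a set \<Rightarrow> bool" where
  "decisive W k S \<longleftrightarrow> yes_decisive W k S \<or> no_decisive W k S"

definition successful :: "'a set set \<Rightarrow> 'a \<Rightarrow> 'a set \<Rightarrow> bool" where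
  "successful W k S \<longleftrightarrow> (k \<in> S \<and> S \<in> W) \<or> (k \<notin> S \<and> S \<notin> W)"

definition loyal_children :: "'a set \<Rightarrow> 'a set set \<Rightarrow> 'a set \<Rightarrow> 'a set set" where
  "loyal_children N W S =
     (if S \<in> W then {S - {m} | m. m \<in> S \<and> S - {m} \<in> W}
      else {insert m S | m. m \<in> N - S \<and> insert m S \<notin> W})"

lemma loyal_children_measure:
  assumes "finite N" "S \<subseteq> N" "T \<in> loyal_children N W S"
  shows "(if T \<in> W then card T else card (N - T)) < (if S \<in> W then card S else card (N - S))"
proof (cases "S \<in> W")
  case True
  then obtain m where "m \<in> S" "T = S - {m}" "T \<in> W"
    using assms(3) by (auto simp: loyal_children_def)
  moreover have "finite S" using assms finite_subset by blast
  ultimately have "card T < card S" by (metis card_Diff1_less)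
  then show ?thesis using True \<open>T \<in> W\<close> by simp
next
  case False
  then obtain m where m: "m \<in> N - S" "T = insert m S" "T \<notin> W"
    using assms(3) by (auto simp: loyal_children_def)
  have "N - T = (N - S) - {m}" using m by auto
  moreover have "finite (N - S)" using assms by auto
  ultimately have "card (N - T) < card (N - S)" using m by (metis card_Diff1_less)
  then show ?thesis using False m by simp
qed

function alpha :: "'a set \<Rightarrow> 'a set set \<Rightarrow> 'a \<Rightarrow> 'a set \<Rightarrow> real" where
  "alpha N W k S =
     (if \<not> (finite N \<and> S \<subseteq> N) then 0
      else if decisive W k S then 1
      else if \<not> successful W k S then 0
      else (\<Sum>T\<in>loyal_children N W S. alpha N W k T) / real (card (loyal_children N W S)))"
  by pat_completeness auto
termination
proof (relation "measure (\<lambda>(N, W, k, S). if S \<in> W then card S else card (N - S))")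
  show "wf (measure (\<lambda>(N, W, k, S). if S \<in> W then card S else card (N - S)))" by simp
next
  fix N :: "'a set" and W k S T
  assume "\<not> \<not> (finite N \<and> S \<subseteq> N)" "T \<in> loyal_children N W S"
  then show "((N, W, k, T), N, W, k, S) \<in> measure (\<lambda>(N, W, k, S). if S \<in> W then card S else card (N - S))"
    using loyal_children_measure[of N S T W] by simp
qed

declare alpha.simps [simp del]

definition RM' :: "'a set \<Rightarrow> 'a set set \<Rightarrow> 'a \<Rightarrow> real" where
  "RM' N W k = (\<Sum>S\<in>Pow N. alpha N W k S) / 2 ^ card N"

definition yes_blocker :: "'a set set \<Rightarrow> 'a \<Rightarrow> bool" where
  "yes_blocker W b \<longleftrightarrow> (\<forall>S\<in>W. b \<in> S)"

definition no_blocker :: "'a set \<Rightarrow> 'a set set \<Rightarrow> 'a \<Rightarrow> bool" where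
  "no_blocker N W b \<longleftrightarrow> (\<forall>S\<in>Pow N. S \<notin> W \<longrightarrow> b \<notin> S)"

text \<open>Donation game G^{j\<rightarrow>i}: i votes as the pair (i,j) did; j becomes a dummy.\<close>

definition donate :: "'a set \<Rightarrow> 'a set set \<Rightarrow> 'a \<Rightarrow> 'a \<Rightarrow> 'a set set" where
  "donate N W j i = {T. T \<subseteq> N \<and>
      (if i \<in> T then insert i (insert j (T - {i, j})) \<in> W else T - {i, j} \<in> W)}"

end

theory Submission
  imports Defs
begin

text \<open>
  The divisions of N split into fibres R, R+j, R+i, R+i+j with R \<subseteq> N - {i,j}, and the
  inequality is proved fibrewise. Suppose first that j is a YES-blocker. Then j is a dummy and i a
  YES-blocker of the donation game, so there the score of i on R+i and on R+i+j is the indicator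
  of R+i+j \<in> W; and whenever R+i+j \<in> W, in G one of i, j is decisive at R+j and j is decisive
  at R+i+j. On R and R+j the score of i in the donation game equals the score of j in G at R+i,
  which is at most alpha_i(R) + alpha_j(R). Both facts follow by induction on |N - R|: since
  every set missing j is losing, all scores involved are averages over one-player augmentations.

  The NO-blocker case reduces to this one by duality: S \<mapsto> N - S maps G to the dual game
  {S. N - S \<notin> W}, preserves the recursive efficacy scores, commutes with donation and turns
  NO-blockers into YES-blockers.
\<close>

lemma alpha_bounds: "0 \<le> alpha N W k S \<and> alpha N W k S \<le> 1"
proof (induction N W k S rule: alpha.induct)
  case (1 N W k S)
  show ?case
  proof (cases "finite N \<and> S \<subseteq> N \<and> \<not> decisive W k S \<and> successful W k S")
    case False
    then have "alpha N W k S \<in> {0, 1}" by (subst alpha.simps) auto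
    then show ?thesis by auto
  next
    case True
    define L where "L = loyal_children N W S"
    have "\<And>T. T \<in> L \<Longrightarrow> 0 \<le> alpha N W k T \<and> alpha N W k T \<le> 1"
      using 1 True L_def by blast
    then have "0 \<le> (\<Sum>T\<in>L. alpha N W k T)" "(\<Sum>T\<in>L. alpha N W k T) \<le> real (card L)"
      by (auto intro: sum_nonneg sum_bounded_above[where K = 1, simplified])
    moreover have "alpha N W k S = (\<Sum>T\<in>L. alpha N W k T) / real (card L)"
      using True L_def by (subst alpha.simps) auto
    ultimately show ?thesis by (simp add: divide_le_eq)
  qed
qed

lemma alpha_nonneg: "0 \<le> alpha N W k S"
  using alpha_bounds by (rule conjunct1)

lemma alpha_le_one: "alpha N W k S \<le> 1"
  using alpha_bounds by (rule conjunct2)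

lemma alpha_decisive: "finite N \<Longrightarrow> S \<subseteq> N \<Longrightarrow> decisive W k S \<Longrightarrow> alpha N W k S = 1"
  by (subst alpha.simps) auto

lemma alpha_unsuccessful:
  "finite N \<Longrightarrow> S \<subseteq> N \<Longrightarrow> \<not> successful W k S \<Longrightarrow> alpha N W k S = 0"
  by (subst alpha.simps) (auto simp: decisive_def yes_decisive_def no_decisive_def successful_def)

lemma alpha_average:
  assumes "finite N" "S \<subseteq> N" "successful W k S" "\<not> decisive W k S"
  shows "real (card (loyal_children N W S)) * alpha N W k S
           = (\<Sum>T\<in>loyal_children N W S. alpha N W k T)"
proof -
  have "loyal_children N W S \<subseteq> Pow N"
    using assms(2) by (auto simp: loyal_children_def)
  then have "finite (loyal_children N W S)"
    using assms(1) by (simp add: finite_subset)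
  moreover have "alpha N W k S
      = (\<Sum>T\<in>loyal_children N W S. alpha N W k T) / real (card (loyal_children N W S))"
    using assms by (subst alpha.simps) simp
  ultimately show ?thesis
    by (cases "loyal_children N W S = {}") auto
qed

lemma alpha_losing_average:
  assumes "finite N" "S \<subseteq> N" "S \<notin> W" "k \<notin> S" "\<not> decisive W k S"
  defines "M \<equiv> {m \<in> N - S. insert m S \<notin> W}"
  shows "real (card M) * alpha N W k S = (\<Sum>m\<in>M. alpha N W k (insert m S))"
proof -
  have "loyal_children N W S = (\<lambda>m. insert m S) ` M"
    using assms(3) by (auto simp: loyal_children_def M_def)
  moreover have "inj_on (\<lambda>m. insert m S) M"
    by (auto simp: inj_on_def M_def)
  ultimately show ?thesis
    using alpha_average[of N S W k] assms
    by (simp add: successful_def sum.reindex card_image)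
qed

lemma alpha_winning_average:
  assumes "finite N" "S \<subseteq> N" "S \<in> W" "k \<in> S" "\<not> decisive W k S"
  defines "M \<equiv> {m \<in> S. S - {m} \<in> W}"
  shows "real (card M) * alpha N W k S = (\<Sum>m\<in>M. alpha N W k (S - {m}))"
proof -
  have "loyal_children N W S = (\<lambda>m. S - {m}) ` M"
    using assms(3) by (auto simp: loyal_children_def M_def)
  moreover have "inj_on (\<lambda>m. S - {m}) M"
    by (auto simp: inj_on_def M_def)
  ultimately show ?thesis
    using alpha_average[of N S W k] assms
    by (simp add: successful_def sum.reindex card_image)
qed

definition dummy :: "'a set set \<Rightarrow> 'a \<Rightarrow> bool" where
  "dummy W d \<longleftrightarrow> (\<forall>S. S \<in> W \<longleftrightarrow> S - {d} \<in> W)"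

lemma dummy_insert_iff: "dummy W d \<Longrightarrow> insert d S \<in> W \<longleftrightarrow> S \<in> W"
proof -
  assume "dummy W d"
  then have "insert d S \<in> W \<longleftrightarrow> insert d S - {d} \<in> W" "S \<in> W \<longleftrightarrow> S - {d} \<in> W"
    unfolding dummy_def by blast+
  then show ?thesis by simp
qed

lemma decisive_insert_dummy_iff:
  "dummy W d \<Longrightarrow> k \<noteq> d \<Longrightarrow> decisive W k (insert d S) \<longleftrightarrow> decisive W k S"
  by (simp add: decisive_def yes_decisive_def no_decisive_def dummy_insert_iff
      insert_commute insert_Diff_if)

lemma successful_insert_dummy_iff:
  "dummy W d \<Longrightarrow> k \<noteq> d \<Longrightarrow> successful W k (insert d S) \<longleftrightarrow> successful W k S"
  by (simp add: successful_def dummy_insert_iff)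

text \<open>
  In the averaging recursion, the loyal children of S and of S + d correspond to each other via
  T \<mapsto> T + d, except that one of the two nodes S, S + d is an extra loyal child of the other.
\<close>

lemma alpha_insert_dummy:
  "dummy W d \<Longrightarrow> k \<noteq> d \<Longrightarrow> d \<in> N \<Longrightarrow> d \<notin> S
    \<Longrightarrow> alpha N W k (insert d S) = alpha N W k S"
proof (induction N W k S rule: alpha.induct)
  case (1 N W k S)
  note dummy = \<open>dummy W d\<close>
  let ?a = "alpha N W k"
  have win: "insert d S \<in> W \<longleftrightarrow> S \<in> W"
    using dummy by (rule dummy_insert_iff)
  have dec: "decisive W k (insert d S) \<longleftrightarrow> decisive W k S"
    using dummy \<open>k \<noteq> d\<close> by (rule decisive_insert_dummy_iff)
  consider "\<not> (finite N \<and> S \<subseteq> N)" | "finite N" "S \<subseteq> N" "decisive W k S"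
    | "finite N" "S \<subseteq> N" "\<not> successful W k S"
    | "finite N" "S \<subseteq> N" "\<not> decisive W k S" "S \<notin> W" "k \<notin> S"
    | "finite N" "S \<subseteq> N" "\<not> decisive W k S" "S \<in> W" "k \<in> S"
    by (auto simp: successful_def)
  then show ?case
  proof cases
    case 1
    then show ?thesis using \<open>d \<in> N\<close> by (simp add: alpha.simps[of N W k])
  next
    case 2
    then show ?thesis using \<open>d \<in> N\<close> dec by (simp add: alpha_decisive)
  next
    case 3
    then show ?thesis
      using \<open>d \<in> N\<close> successful_insert_dummy_iff[OF dummy \<open>k \<noteq> d\<close>]
      by (simp add: alpha_unsuccessful)
  next
    case losing: 4
    define M where "M = {m \<in> N - insert d S. insert m S \<notin> W}"
    have "{m \<in> N - S. insert m S \<notin> W} = insert d M"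
      using losing win \<open>d \<in> N\<close> \<open>d \<notin> S\<close> by (auto simp: M_def)
    moreover have "finite M" using losing by (simp add: M_def)
    ultimately have "real (card M + 1) * ?a S = ?a (insert d S) + (\<Sum>m\<in>M. ?a (insert m S))"
      using alpha_losing_average[of N S W k] losing by (simp add: M_def)
    moreover have "{m \<in> N - insert d S. insert m (insert d S) \<notin> W} = M"
      using dummy by (auto simp: M_def insert_commute[of _ d] dummy_insert_iff)
    then have "real (card M) * ?a (insert d S) = (\<Sum>m\<in>M. ?a (insert d (insert m S)))"
      using alpha_losing_average[of N "insert d S" W k] losing win dec \<open>d \<in> N\<close> \<open>k \<noteq> d\<close>
      by (simp add: insert_commute[of _ d])
    moreover have "?a (insert d (insert m S)) = ?a (insert m S)" if "m \<in> M" for m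
    proof (rule "1.IH")
      show "insert m S \<in> loyal_children N W S"
        using that losing by (auto simp: loyal_children_def M_def)
    qed (use that losing 1 in \<open>auto simp: M_def successful_def\<close>)
    ultimately have "real (card M + 1) * ?a S = real (card M + 1) * ?a (insert d S)"
      by (simp add: algebra_simps)
    then show ?thesis by simp
  next
    case winning: 5
    define M where "M = {m \<in> S. S - {m} \<in> W}"
    have "finite M" "d \<notin> M"
      using winning \<open>d \<notin> S\<close> by (auto simp: M_def intro: finite_subset)
    have "{m \<in> insert d S. insert d S - {m} \<in> W} = insert d M"
      using winning dummy \<open>d \<notin> S\<close> by (auto simp: M_def insert_Diff_if dummy_insert_iff)
    then have "real (card M + 1) * ?a (insert d S) = (\<Sum>m\<in>insert d M. ?a (insert d S - {m}))"
      using alpha_winning_average[of N "insert d S" W k] winning win dec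
        \<open>d \<in> N\<close> \<open>finite M\<close> \<open>d \<notin> M\<close>
      by simp
    also have "\<dots> = ?a S + (\<Sum>m\<in>M. ?a (insert d S - {m}))"
      using \<open>finite M\<close> \<open>d \<notin> M\<close> \<open>d \<notin> S\<close> by simp
    also have "(\<Sum>m\<in>M. ?a (insert d S - {m})) = (\<Sum>m\<in>M. ?a (S - {m}))"
    proof (rule sum.cong)
      fix m assume "m \<in> M"
      then have "insert d S - {m} = insert d (S - {m})" and "S - {m} \<in> loyal_children N W S"
        using winning \<open>d \<notin> M\<close> by (auto simp: M_def loyal_children_def)
      then show "?a (insert d S - {m}) = ?a (S - {m})"
        using "1.IH" winning 1 by (simp add: successful_def)
    qed simp
    also have "(\<Sum>m\<in>M. ?a (S - {m})) = real (card M) * ?a S"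
      using alpha_winning_average[of N S W k] winning by (simp add: M_def)
    finally have "real (card M + 1) * ?a (insert d S) = real (card M + 1) * ?a S"
      by (simp add: algebra_simps)
    then show ?thesis by simp
  qed
qed

lemma svg_mono: "svg N W \<Longrightarrow> S \<in> W \<Longrightarrow> S \<subseteq> T \<Longrightarrow> T \<subseteq> N \<Longrightarrow> T \<in> W"
  unfolding svg_def by blast

definition dual_game :: "'a set \<Rightarrow> 'a set set \<Rightarrow> 'a set set" where
  "dual_game N W = {S. S \<subseteq> N \<and> N - S \<notin> W}"

lemma compl_in_dual_game_iff: "S \<subseteq> N \<Longrightarrow> N - S \<in> dual_game N W \<longleftrightarrow> S \<notin> W"
  by (auto simp: dual_game_def double_diff)

lemma svg_dual_game:
  assumes "svg N W"
  shows "svg N (dual_game N W)"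
proof -
  have "N - T \<notin> W" if "S \<subseteq> T" "T \<subseteq> N" "N - S \<notin> W" for S T
    using that svg_mono[OF assms, of "N - T" "N - S"] Diff_mono[of N N T S] by blast
  then show ?thesis
    using assms unfolding svg_def dual_game_def by auto
qed

lemma yes_blocker_dual_game: "b \<in> N \<Longrightarrow> no_blocker N W b \<Longrightarrow> yes_blocker (dual_game N W) b"
  by (auto simp: no_blocker_def yes_blocker_def dual_game_def)

lemma donate_dual_game:
  assumes "i \<in> N" "j \<in> N"
  shows "donate N (dual_game N W) j i = dual_game N (donate N W j i)"
proof (rule set_eqI)
  fix T
  show "T \<in> donate N (dual_game N W) j i \<longleftrightarrow> T \<in> dual_game N (donate N W j i)"
  proof (cases "T \<subseteq> N")
    case False
    then show ?thesis by (simp add: donate_def dual_game_def)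
  next
    case True
    show ?thesis
    proof (cases "i \<in> T")
      case i: True
      have "N - insert i (insert j (T - {i, j})) = N - T - {i, j}"
        and "insert i (insert j (T - {i, j})) \<subseteq> N" "i \<notin> N - T"
        using True i assms by auto
      then show ?thesis
        using True i by (simp add: donate_def dual_game_def)
    next
      case i: False
      have "N - (T - {i, j}) = insert i (insert j (N - T - {i, j}))"
        and "T - {i, j} \<subseteq> N" "i \<in> N - T"
        using True i assms by auto
      then show ?thesis
        using True i by (simp add: donate_def dual_game_def)
    qed
  qed
qed

lemma loyal_children_dual_game:
  assumes "S \<subseteq> N"
  shows "loyal_children N (dual_game N W) (N - S) = (\<lambda>T. N - T) ` loyal_children N W S"
proof (cases "S \<in> W")
  case True
  have "N - S \<notin> dual_game N W"
    using True assms by (simp add: compl_in_dual_game_iff)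
  moreover have "N - (N - S) = S"
    using assms by auto
  ultimately have "loyal_children N (dual_game N W) (N - S)
      = (\<lambda>m. insert m (N - S)) ` {m \<in> S. insert m (N - S) \<notin> dual_game N W}"
    by (simp add: loyal_children_def setcompr_eq_image)
  also have "\<dots> = (\<lambda>m. N - (S - {m})) ` {m \<in> S. S - {m} \<in> W}"
  proof (rule image_cong)
    show "{m \<in> S. insert m (N - S) \<notin> dual_game N W} = {m \<in> S. S - {m} \<in> W}"
    proof (rule Collect_cong)
      fix m
      have "m \<in> S \<Longrightarrow> insert m (N - S) = N - (S - {m})"
        using assms by auto
      moreover have "N - (S - {m}) \<in> dual_game N W \<longleftrightarrow> S - {m} \<notin> W"
        using assms by (intro compl_in_dual_game_iff) auto
      ultimately show "(m \<in> S \<and> insert m (N - S) \<notin> dual_game N W) \<longleftrightarrow> (m \<in> S \<and> S - {m} \<in> W)"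
        by auto
    qed
  qed (use assms in auto)
  also have "\<dots> = (\<lambda>T. N - T) ` loyal_children N W S"
    using True by (simp add: loyal_children_def setcompr_eq_image image_image)
  finally show ?thesis .
next
  case False
  have "N - S \<in> dual_game N W"
    using False assms by (simp add: compl_in_dual_game_iff)
  then have "loyal_children N (dual_game N W) (N - S)
      = (\<lambda>m. N - S - {m}) ` {m \<in> N - S. N - S - {m} \<in> dual_game N W}"
    by (simp add: loyal_children_def setcompr_eq_image)
  also have "\<dots> = (\<lambda>m. N - insert m S) ` {m \<in> N - S. insert m S \<notin> W}"
  proof (rule image_cong)
    have "N - S - {m} = N - insert m S" for m
      by auto
    moreover have "N - insert m S \<in> dual_game N W \<longleftrightarrow> insert m S \<notin> W" if "m \<in> N" for m
      using assms that by (intro compl_in_dual_game_iff) auto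
    ultimately show "{m \<in> N - S. N - S - {m} \<in> dual_game N W} = {m \<in> N - S. insert m S \<notin> W}"
      by auto
  qed auto
  also have "\<dots> = (\<lambda>T. N - T) ` loyal_children N W S"
    using False by (simp add: loyal_children_def setcompr_eq_image image_image)
  finally show ?thesis .
qed

lemma decisive_dual_game_iff:
  assumes "k \<in> N" "S \<subseteq> N"
  shows "decisive (dual_game N W) k (N - S) \<longleftrightarrow> decisive W k S"
proof -
  have "insert k S \<subseteq> N" "S - {k} \<subseteq> N"
    using assms by auto
  moreover have "N - S - {k} = N - insert k S" "insert k (N - S) = N - (S - {k})"
    using assms by auto
  ultimately show ?thesis
    using assms unfolding decisive_def yes_decisive_def no_decisive_def
    by (auto simp only: compl_in_dual_game_iff)
qed

lemma successful_dual_game_iff: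
  "k \<in> N \<Longrightarrow> S \<subseteq> N \<Longrightarrow> successful (dual_game N W) k (N - S) \<longleftrightarrow> successful W k S"
  by (auto simp: successful_def compl_in_dual_game_iff)

lemma alpha_dual_game:
  "k \<in> N \<Longrightarrow> S \<subseteq> N \<Longrightarrow> alpha N (dual_game N W) k (N - S) = alpha N W k S"
proof (induction N W k S rule: alpha.induct)
  case (1 N W k S)
  let ?W' = "dual_game N W"
  have NS: "N - (N - S) = S" "N - S \<subseteq> N"
    using 1 by auto
  note dec = decisive_dual_game_iff[OF 1(2,3)] and succ = successful_dual_game_iff[OF 1(2,3)]
  consider "\<not> finite N" | "finite N" "decisive W k S" | "finite N" "\<not> successful W k S"
    | "finite N" "\<not> decisive W k S" "successful W k S"
    by blast
  then show ?case
  proof cases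
    case 1
    then show ?thesis by (simp add: alpha.simps[of N _ k])
  next
    case 2
    then show ?thesis using 1 dec NS by (simp add: alpha_decisive)
  next
    case 3
    then show ?thesis using 1 succ NS by (simp add: alpha_unsuccessful)
  next
    case average: 4
    define L where "L = loyal_children N W S"
    have "L \<subseteq> Pow N"
      using 1 by (auto simp: L_def loyal_children_def)
    then have inj: "inj_on (\<lambda>T. N - T) L"
      by (auto simp: inj_on_def double_diff)
    have "alpha N ?W' k (N - S) = (\<Sum>T\<in>L. alpha N ?W' k (N - T)) / real (card L)"
      using average 1 dec succ NS
      by (subst alpha.simps) (simp add: loyal_children_dual_game L_def[symmetric]
          sum.reindex[OF inj] card_image[OF inj])
    also have "(\<Sum>T\<in>L. alpha N ?W' k (N - T)) = (\<Sum>T\<in>L. alpha N W k T)"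
      using 1 average \<open>L \<subseteq> Pow N\<close> by (intro sum.cong) (auto simp: L_def)
    also have "alpha N W k S = (\<Sum>T\<in>L. alpha N W k T) / real (card L)"
      using average 1 by (subst alpha.simps) (simp add: L_def)
    ultimately show ?thesis by simp
  qed
qed

lemma RM'_dual_game: "k \<in> N \<Longrightarrow> RM' N (dual_game N W) k = RM' N W k"
proof -
  assume "k \<in> N"
  have "bij_betw (\<lambda>S. N - S) (Pow N) (Pow N)"
    by (rule bij_betw_byWitness[where f' = "\<lambda>S. N - S"]) auto
  then have "(\<Sum>S\<in>Pow N. alpha N (dual_game N W) k S)
      = (\<Sum>S\<in>Pow N. alpha N (dual_game N W) k (N - S))"
    by (rule sum.reindex_bij_betw[symmetric])
  also have "\<dots> = (\<Sum>S\<in>Pow N. alpha N W k S)"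
    using \<open>k \<in> N\<close> by (intro sum.cong) (auto simp: alpha_dual_game)
  finally show ?thesis by (simp add: RM'_def)
qed

lemma dummy_donate:
  assumes "i \<noteq> j" "j \<in> N"
  shows "dummy (donate N W j i) j"
proof -
  have "S - {j} - {i, j} = S - {i, j}" for S :: "'a set"
    by auto
  then show ?thesis
    using assms unfolding dummy_def donate_def by auto
qed

lemma donate_yes_blocker_iff:
  assumes "yes_blocker W j"
  shows "T \<in> donate N W j i \<longleftrightarrow> T \<subseteq> N \<and> i \<in> T \<and> insert j T \<in> W"
proof -
  have "i \<in> T \<Longrightarrow> insert i (insert j (T - {i, j})) = insert j T"
    by auto
  then show ?thesis
    using assms by (auto simp: donate_def yes_blocker_def)
qed

lemma alpha_yes_blocker_eq_1:
  "yes_blocker W b \<Longrightarrow> finite N \<Longrightarrow> S \<subseteq> N \<Longrightarrow> b \<notin> S \<Longrightarrow> insert b S \<in> W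
    \<Longrightarrow> alpha N W b S = 1"
  by (auto intro!: alpha_decisive simp: decisive_def no_decisive_def yes_blocker_def)

lemma alpha_yes_blocker_losing_average:
  assumes "yes_blocker W b" "finite N" "R \<subseteq> N" "b \<notin> R" "insert b R \<notin> W" "k \<in> N - R"
  shows "real (card (N - R)) * alpha N W k R = (\<Sum>m\<in>N - R. alpha N W k (insert m R))"
proof -
  have mem: "S \<in> W \<Longrightarrow> b \<in> S" for S
    using assms(1) by (simp add: yes_blocker_def)
  have losing: "insert m R \<notin> W" if "m \<in> N - R" for m
    using assms(4,5) that mem[of "insert m R"] by (cases "m = b") auto
  then have "{m \<in> N - R. insert m R \<notin> W} = N - R"
    by blast
  moreover have "R \<notin> W"
    using assms(4) mem by blast
  moreover have "\<not> decisive W k R"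
    using assms(6) losing by (auto simp: decisive_def yes_decisive_def no_decisive_def)
  ultimately show ?thesis
    using alpha_losing_average[OF assms(2,3), of W k] assms(6) by simp
qed

lemma yes_blocker_donate: "yes_blocker W j \<Longrightarrow> yes_blocker (donate N W j i) i"
  by (simp add: yes_blocker_def donate_yes_blocker_iff)

lemma card_Diff_insert_less: "finite A \<Longrightarrow> m \<in> A - B \<Longrightarrow> card (A - insert m B) < card (A - B)"
  by (metis Diff_insert card_Diff1_less finite_Diff)

lemma sum_Pow_insert:
  assumes "finite A" "a \<notin> A"
  shows "sum f (Pow (insert a A)) = sum f (Pow A) + (\<Sum>T\<in>Pow A. f (insert a T))"
proof -
  have "inj_on (insert a) (Pow A)"
    using assms(2) unfolding inj_on_def by (metis PowD insert_ident subsetD)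
  moreover have "Pow A \<inter> insert a ` Pow A = {}"
    using assms(2) by auto
  ultimately show ?thesis
    using assms(1) by (simp add: Pow_insert sum.union_disjoint sum.reindex)
qed

lemma sum_Pow_fiber:
  assumes "finite N" "i \<in> N" "j \<in> N" "i \<noteq> j"
  shows "sum f (Pow N) = (\<Sum>R\<in>Pow (N - {i, j}).
           f R + f (insert j R) + f (insert i R) + f (insert i (insert j R)))"
proof -
  define M where "M = N - {i, j}"
  have "N = insert i (insert j M)" "finite M" "i \<notin> insert j M" "j \<notin> M"
    using assms by (auto simp: M_def)
  then show ?thesis
    by (simp add: sum_Pow_insert sum.distrib M_def[symmetric] algebra_simps)
qed

context
  fixes N :: "'a set" and W :: "'a set set" and i j :: 'a
  assumes svg: "svg N W" and i: "i \<in> N" and j: "j \<in> N" and "i \<noteq> j"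
    and blocker: "yes_blocker W j"
begin

lemma finite_players: "finite N"
  using svg by (simp add: svg_def)

lemma alpha_yes_blocker_recursion:
  assumes R: "R \<subseteq> N - {i, j}" and U: "insert i (insert j R) \<notin> W"
  defines "K \<equiv> N - {i, j} - R"
  shows "real (card K + 1) * alpha N W j (insert i R)
           = (\<Sum>m\<in>K. alpha N W j (insert i (insert m R)))"
proof -
  have "finite K" "j \<notin> K"
    using finite_players by (auto simp: K_def)
  have iR: "insert i R \<subseteq> N" "j \<notin> insert i R" "insert j (insert i R) \<notin> W"
    using R U i \<open>i \<noteq> j\<close> by (auto simp: insert_commute)
  have "N - insert i R = insert j K"
    using R j \<open>i \<noteq> j\<close> by (auto simp: K_def)
  then have "real (card (insert j K)) * alpha N W j (insert i R)
      = (\<Sum>m\<in>insert j K. alpha N W j (insert m (insert i R)))"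
    using alpha_yes_blocker_losing_average[OF blocker finite_players iR, of j] by simp
  also have "\<dots> = alpha N W j (insert j (insert i R))
      + (\<Sum>m\<in>K. alpha N W j (insert i (insert m R)))"
    using \<open>finite K\<close> \<open>j \<notin> K\<close> by (simp add: insert_commute[of _ i])
  also have "alpha N W j (insert j (insert i R)) = 0"
    using iR finite_players j by (intro alpha_unsuccessful) (auto simp: successful_def)
  finally show ?thesis
    using \<open>finite K\<close> \<open>j \<notin> K\<close> by simp
qed

lemma alpha_yes_blocker_recursion_le:
  assumes R: "R \<subseteq> N - {i, j}" and jR: "insert j R \<notin> W"
  defines "K \<equiv> N - {i, j} - R"
  shows "real (card K + 1) * alpha N W j (insert i R)
           \<le> alpha N W i (insert j R) + (\<Sum>m\<in>K. alpha N W j (insert i (insert m R)))"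
proof (cases "insert i (insert j R) \<in> W")
  case True
  have iR: "insert i R \<subseteq> N" "j \<notin> insert i R" "insert j (insert i R) \<in> W"
    using R True i \<open>i \<noteq> j\<close> by (auto simp: insert_commute)
  have jR': "insert j R \<subseteq> N" "i \<notin> insert j R"
    using R j \<open>i \<noteq> j\<close> by auto
  have "alpha N W j (insert i (insert m R)) = 1" if "m \<in> K" for m
  proof (rule alpha_yes_blocker_eq_1[OF blocker finite_players])
    show "insert i (insert m R) \<subseteq> N" "j \<notin> insert i (insert m R)"
      using that R i \<open>i \<noteq> j\<close> by (auto simp: K_def)
    have "insert i (insert j R) \<subseteq> insert j (insert i (insert m R))"
      by blast
    then show "insert j (insert i (insert m R)) \<in> W"
      using svg_mono[OF svg True] \<open>insert i (insert m R) \<subseteq> N\<close> j by blast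
  qed
  then have "(\<Sum>m\<in>K. alpha N W j (insert i (insert m R))) = real (card K)"
    by simp
  moreover have "alpha N W j (insert i R) = 1"
    using alpha_yes_blocker_eq_1[OF blocker finite_players iR] .
  moreover have "alpha N W i (insert j R) = 1"
    using finite_players jR' jR True
    by (intro alpha_decisive) (simp_all add: decisive_def no_decisive_def)
  ultimately show ?thesis
    by simp
next
  case False
  then show ?thesis
    using alpha_yes_blocker_recursion[OF R False] alpha_nonneg[of N W i "insert j R"]
    by (simp add: K_def)
qed

lemma alpha_yes_blocker_subadditive:
  assumes "R \<subseteq> N - {i, j}"
  shows "alpha N W j (insert i R) \<le> alpha N W i R + alpha N W j R"
  using assms
proof (induction "card (N - R)" arbitrary: R rule: less_induct)
  case less
  define K where "K = N - {i, j} - R"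
  let ?g = "\<lambda>T. alpha N W i T + alpha N W j T"
  have "finite K" "i \<notin> K" "j \<notin> K"
    using finite_players by (auto simp: K_def)
  have R: "R \<subseteq> N" "i \<notin> R" "j \<notin> R"
    using less.prems by auto
  have NR: "N - R = insert i (insert j K)"
    using R i j by (auto simp: K_def)
  show ?case
  proof (cases "insert j R \<in> W")
    case True
    then have "alpha N W j R = 1"
      using finite_players R by (intro alpha_yes_blocker_eq_1[OF blocker])
    then show ?thesis
      using alpha_le_one[of N W j "insert i R"] alpha_nonneg[of N W i R] by simp
  next
    case jR: False
    have "real (card (N - R)) * ?g R = (\<Sum>m\<in>N - R. ?g (insert m R))"
      using alpha_yes_blocker_losing_average[OF blocker finite_players R(1,3) jR] R i j
      by (simp add: distrib_left sum.distrib)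
    also have "\<dots> = ?g (insert i R) + ?g (insert j R) + (\<Sum>m\<in>K. ?g (insert m R))"
      using \<open>finite K\<close> \<open>i \<notin> K\<close> \<open>j \<notin> K\<close> \<open>i \<noteq> j\<close> by (simp add: NR)
    also have "\<dots> \<ge> alpha N W j (insert i R) + alpha N W i (insert j R)
        + (\<Sum>m\<in>K. alpha N W j (insert i (insert m R)))"
    proof -
      have "alpha N W j (insert i (insert m R)) \<le> ?g (insert m R)" if "m \<in> K" for m
      proof (rule less.hyps)
        show "card (N - insert m R) < card (N - R)"
          using that finite_players by (intro card_Diff_insert_less) (auto simp: K_def)
        show "insert m R \<subseteq> N - {i, j}"
          using that less.prems by (auto simp: K_def)
      qed
      then have "(\<Sum>m\<in>K. alpha N W j (insert i (insert m R))) \<le> (\<Sum>m\<in>K. ?g (insert m R))"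
        by (rule sum_mono)
      then show ?thesis
        using alpha_nonneg[of N W i "insert i R"] alpha_nonneg[of N W j "insert j R"] by linarith
    qed
    finally have "real (card K + 2) * alpha N W j (insert i R) \<le> real (card K + 2) * ?g R"
      using alpha_yes_blocker_recursion_le[OF less.prems jR] \<open>finite K\<close> \<open>i \<notin> K\<close> \<open>j \<notin> K\<close>
        \<open>i \<noteq> j\<close>
      by (simp add: NR K_def algebra_simps)
    then show ?thesis
      by (simp add: mult_le_cancel_left_pos)
  qed
qed

lemma alpha_donate_insert:
  assumes "R \<subseteq> N - {i, j}"
  shows "alpha N (donate N W j i) i (insert i R) = (if insert i (insert j R) \<in> W then 1 else 0)"
proof -
  have "insert i R \<subseteq> N" "R \<notin> donate N W j i" "insert i R - {i} = R"
    using assms i by (auto simp: donate_yes_blocker_iff[OF blocker])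
  moreover have "insert i R \<in> donate N W j i \<longleftrightarrow> insert i (insert j R) \<in> W"
    using assms i by (auto simp: donate_yes_blocker_iff[OF blocker] insert_commute)
  ultimately show ?thesis
    using finite_players
    by (auto intro: alpha_decisive alpha_unsuccessful simp: decisive_def yes_decisive_def
        successful_def)
qed

lemma alpha_donate:
  assumes "R \<subseteq> N - {i, j}"
  shows "alpha N (donate N W j i) i R = alpha N W j (insert i R)"
  using assms
proof (induction "card (N - R)" arbitrary: R rule: less_induct)
  case less
  let ?V = "donate N W j i"
  define K where "K = N - {i, j} - R"
  have "finite K" "i \<notin> K" "j \<notin> K"
    using finite_players by (auto simp: K_def)
  have R: "R \<subseteq> N" "i \<notin> R" "j \<notin> R"
    using less.prems by auto
  have NR: "N - R = insert i (insert j K)"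
    using R i j by (auto simp: K_def)
  note V_blocker = yes_blocker_donate[OF blocker, of N i]
  have iR: "insert i R \<in> ?V \<longleftrightarrow> insert i (insert j R) \<in> W"
    using R i by (simp add: donate_yes_blocker_iff[OF blocker] insert_commute)
  show ?case
  proof (cases "insert i (insert j R) \<in> W")
    case True
    then have "alpha N ?V i R = 1"
      using alpha_yes_blocker_eq_1[OF V_blocker finite_players R(1,2)] iR by simp
    moreover have "alpha N W j (insert i R) = 1"
      using finite_players R True i \<open>i \<noteq> j\<close>
      by (intro alpha_yes_blocker_eq_1[OF blocker]) (auto simp: insert_commute)
    ultimately show ?thesis by simp
  next
    case U: False
    have "real (card (N - R)) * alpha N ?V i R = (\<Sum>m\<in>N - R. alpha N ?V i (insert m R))"
      using alpha_yes_blocker_losing_average[OF V_blocker finite_players R(1,2)] iR U i R(2)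
      by simp
    also have "\<dots> = alpha N ?V i (insert i R) + alpha N ?V i (insert j R)
        + (\<Sum>m\<in>K. alpha N ?V i (insert m R))"
      using \<open>finite K\<close> \<open>i \<notin> K\<close> \<open>j \<notin> K\<close> \<open>i \<noteq> j\<close> by (simp add: NR)
    also have "alpha N ?V i (insert i R) = 0"
      using alpha_donate_insert[OF less.prems] U by simp
    also have "alpha N ?V i (insert j R) = alpha N ?V i R"
      using dummy_donate[OF \<open>i \<noteq> j\<close> j] \<open>i \<noteq> j\<close> j R by (intro alpha_insert_dummy)
    also have "(\<Sum>m\<in>K. alpha N ?V i (insert m R)) = (\<Sum>m\<in>K. alpha N W j (insert i (insert m R)))"
    proof (rule sum.cong)
      fix m assume "m \<in> K"
      show "alpha N ?V i (insert m R) = alpha N W j (insert i (insert m R))"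
      proof (rule less.hyps)
        show "card (N - insert m R) < card (N - R)"
          using \<open>m \<in> K\<close> finite_players by (intro card_Diff_insert_less) (auto simp: K_def)
        show "insert m R \<subseteq> N - {i, j}"
          using \<open>m \<in> K\<close> less.prems by (auto simp: K_def)
      qed
    qed simp
    also have "\<dots> = real (card K + 1) * alpha N W j (insert i R)"
      using alpha_yes_blocker_recursion[OF less.prems U] by (simp add: K_def)
    finally have "real (card K + 2) * alpha N ?V i R
        = alpha N ?V i R + real (card K + 1) * alpha N W j (insert i R)"
      using \<open>finite K\<close> \<open>i \<notin> K\<close> \<open>j \<notin> K\<close> \<open>i \<noteq> j\<close> by (simp add: NR)
    then have "real (card K + 1) * (alpha N ?V i R - alpha N W j (insert i R)) = 0"
      by (simp add: algebra_simps)
    then show ?thesis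
      by simp
  qed
qed

lemma alpha_yes_blocker_winning_fiber:
  assumes R: "R \<subseteq> N - {i, j}" and U: "insert i (insert j R) \<in> W"
  shows "alpha N W j (insert i (insert j R)) = 1"
    and "1 \<le> alpha N W i (insert j R) + alpha N W j (insert j R)"
proof -
  have sets: "R \<subseteq> N" "i \<notin> R" "j \<notin> R" "insert j R \<subseteq> N" "insert i (insert j R) \<subseteq> N"
    using R i j by auto
  have "R \<notin> W" "insert i R \<notin> W"
    using sets \<open>i \<noteq> j\<close> blocker by (auto simp: yes_blocker_def)
  show "alpha N W j (insert i (insert j R)) = 1"
    using finite_players sets \<open>insert i R \<notin> W\<close> U \<open>i \<noteq> j\<close>
    by (intro alpha_decisive) (auto simp: decisive_def yes_decisive_def insert_Diff_if)
  have "alpha N W i (insert j R) = 1 \<or> alpha N W j (insert j R) = 1"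
  proof (cases "insert j R \<in> W")
    case True
    then show ?thesis
      using finite_players sets \<open>R \<notin> W\<close>
      by (intro disjI2 alpha_decisive) (auto simp: decisive_def yes_decisive_def)
  next
    case False
    then show ?thesis
      using finite_players sets U \<open>i \<noteq> j\<close>
      by (intro disjI1 alpha_decisive) (auto simp: decisive_def no_decisive_def)
  qed
  then show "1 \<le> alpha N W i (insert j R) + alpha N W j (insert j R)"
    using alpha_nonneg[of N W] by (metis add.commute le_add_same_cancel1)
qed

lemma alpha_donate_fiber_le:
  assumes R: "R \<subseteq> N - {i, j}"
  defines "h \<equiv> alpha N (donate N W j i) i" and "g \<equiv> \<lambda>T. alpha N W i T + alpha N W j T"
  shows "h R + h (insert j R) + h (insert i R) + h (insert i (insert j R))
      \<le> g R + g (insert j R) + g (insert i R) + g (insert i (insert j R))"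
proof -
  let ?U = "insert i (insert j R)"
  have dummy: "h (insert j T) = h T" if "j \<notin> T" for T
    unfolding h_def using dummy_donate[OF \<open>i \<noteq> j\<close> j] \<open>i \<noteq> j\<close> j that
    by (rule alpha_insert_dummy)
  have "h (insert j R) = h R" "h ?U = h (insert i R)"
    using R \<open>i \<noteq> j\<close> dummy[of R] dummy[of "insert i R"] by (auto simp: insert_commute)
  moreover have "h R \<le> g R" "h R \<le> g (insert i R)"
    using alpha_donate[OF R] alpha_yes_blocker_subadditive[OF R] alpha_nonneg[of N W i "insert i R"]
    by (simp_all add: h_def g_def)
  moreover have "h (insert i R) \<le> g (insert j R)" "h (insert i R) \<le> g ?U"
    using alpha_donate_insert[OF R] alpha_yes_blocker_winning_fiber[OF R] alpha_nonneg[of N W]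
    by (auto simp: h_def g_def)
  ultimately show ?thesis
    by simp
qed

lemma RM'_donate_le_yes_blocker: "RM' N (donate N W j i) i \<le> RM' N W i + RM' N W j"
proof -
  let ?h = "alpha N (donate N W j i) i" and ?g = "\<lambda>T. alpha N W i T + alpha N W j T"
  have "sum ?h (Pow N) \<le> sum ?g (Pow N)"
    unfolding sum_Pow_fiber[OF finite_players i j \<open>i \<noteq> j\<close>]
    by (intro sum_mono alpha_donate_fiber_le) simp
  then show ?thesis
    by (simp add: RM'_def sum.distrib divide_right_mono flip: add_divide_distrib)
qed

end

theorem lemma1:
  fixes N :: "'a set" and W :: "'a set set" and i j :: 'a
  assumes "svg N W"
    and "i \<in> N" and "j \<in> N" and "i \<noteq> j"
    and "yes_blocker W j \<or> no_blocker N W j"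
  shows "RM' N (donate N W j i) i \<le> RM' N W i + RM' N W j"
  using assms(5)
proof
  assume "yes_blocker W j"
  then show ?thesis
    by (rule RM'_donate_le_yes_blocker[OF assms(1-4)])
next
  assume "no_blocker N W j"
  then have "RM' N (donate N (dual_game N W) j i) i
      \<le> RM' N (dual_game N W) i + RM' N (dual_game N W) j"
    by (intro RM'_donate_le_yes_blocker svg_dual_game yes_blocker_dual_game assms(1-4))
  then show ?thesis
    using assms(2,3) by (simp add: donate_dual_game RM'_dual_game)
qed

end
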